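(* Every magma satisfying $\mathrm{x}\simeq\mathrm{x}\diamond((\mathrm{y}\diamond\mathrm{z})\diamond(\mathrm{x}\diamond\mathrm{z}))$ also satisfies the right idempotence law $\mathrm{x}\diamond\mathrm{y}\simeq(\mathrm{x}\diamond\mathrm{y})\diamond\mathrm{y}$.
   Context: A magma is a set with a binary operation $\diamond$; it satisfies a law if the identity holds for all assignments of variables. *)

theory Defs
  imports Main
begin

end

theory Submission
  imports Defs
begin

(* Choosing y and z so that y \<diamond> z collapses first gives x \<diamond> (x \<diamond> x) = x, then
   x \<diamond> (w \<diamond> (x \<diamond> (w \<diamond> w))) = x; in the latter, for x := x \<diamond> y and w := y, the inner
   factor y \<diamond> ((x \<diamond> y) \<diamond> (y \<diamond> y)) collapses to y by the law itself. *)

locale left_absorbing_magma =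
  fixes mult :: "'a \<Rightarrow> 'a \<Rightarrow> 'a" (infixl "\<diamond>" 70)
  assumes absorb: "x = x \<diamond> ((y \<diamond> z) \<diamond> (x \<diamond> z))"
begin

lemma mult_mult_self: "x \<diamond> (x \<diamond> x) = x"
proof -
  let ?t = "(x \<diamond> x) \<diamond> (x \<diamond> x)"
  have "x \<diamond> ?t = x"
    using absorb [of x x x] by simp
  have "x = x \<diamond> ((x \<diamond> ?t) \<diamond> (x \<diamond> ?t))"
    by (rule absorb)
  also have "\<dots> = x \<diamond> (x \<diamond> x)"
    using \<open>x \<diamond> ?t = x\<close> by simp
  finally show ?thesis ..
qed

lemma absorb_mult_square: "x \<diamond> (w \<diamond> (x \<diamond> (w \<diamond> w))) = x"
  using absorb [of x w "w \<diamond> w"] by (simp add: mult_mult_self)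

lemma right_idempotent: "(x \<diamond> y) \<diamond> y = x \<diamond> y"
proof -
  have "y \<diamond> ((x \<diamond> y) \<diamond> (y \<diamond> y)) = y"
    using absorb [of y x y] by simp
  with absorb_mult_square [of "x \<diamond> y" y] show ?thesis
    by simp
qed

end

theorem mainTheorem10:
  fixes op :: "'a \<Rightarrow> 'a \<Rightarrow> 'a"
  assumes "\<And>x y z. x = op x (op (op y z) (op x z))"
  shows "\<And>x y. op x y = op (op x y) y"
proof -
  interpret left_absorbing_magma op
    using assms by unfold_locales
  show "op x y = op (op x y) y" for x y
    by (rule right_idempotent [symmetric])
qed

end
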